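(* Suppose that $G$ is a noncyclotomic nonbipartite graph containing a vertex $v$ such that the induced subgraph on $V(G)\setminus\{v\}$ is cyclotomic. Suppose also that $G$ is a line graph. Then $G$ is a Salem graph.
   Context: Graphs are finite simple graphs; eigenvalues are those of the adjacency matrix. A graph is cyclotomic if all its eigenvalues lie in $[-2,2]$. A line graph is a graph $L(H)$ whose vertices are the edges of some graph $H$, two being adjacent iff the edges share a vertex. A nonbipartite graph is a Salem graph if it has exactly one eigenvalue $\lambda>2$ and no eigenvalues in $(-\infty,-2)$. *)

theory Defs
  imports "Jordan_Normal_Form.Char_Poly"
begin

text \<open>A finite simple graph on the vertex set {0..<n}, given by an adjacency
relation E (only its values on {0..<n} matter).\<close>
definition simple_graph :: "nat \<Rightarrow> (nat \<Rightarrow> nat \<Rightarrow> bool) \<Rightarrow> bool" where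
  "simple_graph n E \<longleftrightarrow> (\<forall>i<n. \<forall>j<n. E i j = E j i) \<and> (\<forall>i<n. \<not> E i i)"

definition adj_mat :: "nat \<Rightarrow> (nat \<Rightarrow> nat \<Rightarrow> bool) \<Rightarrow> real mat" where
  "adj_mat n E = mat n n (\<lambda>(i, j). if E i j then 1 else 0)"

definition cyclotomic :: "nat \<Rightarrow> (nat \<Rightarrow> nat \<Rightarrow> bool) \<Rightarrow> bool" where
  "cyclotomic n E \<longleftrightarrow> (\<forall>x. eigenvalue (adj_mat n E) x \<longrightarrow> -2 \<le> x \<and> x \<le> 2)"

definition bipartite :: "nat \<Rightarrow> (nat \<Rightarrow> nat \<Rightarrow> bool) \<Rightarrow> bool" where
  "bipartite n E \<longleftrightarrow> (\<exists>c :: nat \<Rightarrow> bool. \<forall>i<n. \<forall>j<n. E i j \<longrightarrow> c i \<noteq> c j)"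

text \<open>G is a line graph: there is a finite simple graph H (on {0..<m}, edge
relation F) and a bijection f from V(G) onto the edge set of H (edges as
2-element sets) such that distinct vertices of G are adjacent iff their
images share an endpoint.\<close>
definition line_graph :: "nat \<Rightarrow> (nat \<Rightarrow> nat \<Rightarrow> bool) \<Rightarrow> bool" where
  "line_graph n E \<longleftrightarrow>
     (\<exists>(m::nat) (F :: nat \<Rightarrow> nat \<Rightarrow> bool) (f :: nat \<Rightarrow> nat set).
        simple_graph m F \<and>
        bij_betw f {0..<n} {{a, b} | a b. a < m \<and> b < m \<and> F a b} \<and>
        (\<forall>i<n. \<forall>j<n. i \<noteq> j \<longrightarrow> (E i j \<longleftrightarrow> f i \<inter> f j \<noteq> {})))"

text \<open>Induced subgraph on V \ {v}, relabelled onto {0..<n-1} preserving order.\<close>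
definition del_vertex :: "nat \<Rightarrow> (nat \<Rightarrow> nat \<Rightarrow> bool) \<Rightarrow> nat \<Rightarrow> nat \<Rightarrow> bool" where
  "del_vertex v E i j =
     E (if i < v then i else Suc i) (if j < v then j else Suc j)"

text \<open>Salem graph: nonbipartite, exactly one eigenvalue > 2 (counted with
multiplicity, i.e. as root of the characteristic polynomial), and no
eigenvalue < -2.\<close>
definition salem_graph :: "nat \<Rightarrow> (nat \<Rightarrow> nat \<Rightarrow> bool) \<Rightarrow> bool" where
  "salem_graph n E \<longleftrightarrow> \<not> bipartite n E \<and>
     (\<exists>r>2. eigenvalue (adj_mat n E) r \<and> order r (char_poly (adj_mat n E)) = 1 \<and>
        (\<forall>\<mu>>2. eigenvalue (adj_mat n E) \<mu> \<longrightarrow> \<mu> = r)) \<and>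
     (\<forall>\<mu>. eigenvalue (adj_mat n E) \<mu> \<longrightarrow> -2 \<le> \<mu>)"

end

(* Let A be the adjacency matrix of G, B that of G - v (A with row and column v
   deleted), and p_A, p_B their characteristic polynomials; as G - v is
   cyclotomic, p_B has no root above 2.  Where p_B(x) <> 0, the v-th column of
   adj(xI - A), divided by its v-th entry p_B(x), is a vector z(x) with z(x)_v = 1
   and (xI - A) z(x) = phi(x) e_v for phi = p_A / p_B.  Symmetry of A gives
   phi(x) - phi(t) = (x - t) z(x).z(t), so phi' = |z|^2 >= 1 on (2, oo): phi is
   strictly increasing there, and p_A = phi p_B has at most one root above 2,
   which is simple.  There is such a root since G is noncyclotomic and the
   spectrum of a line graph is bounded below by -2: A + 2I is the Gram matrix of
   the edges of the root graph, viewed as 0/1 vectors on its vertices. *)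

theory Submission
  imports Defs
begin

lemma continuous_on_det:
  fixes F :: "'b::topological_space \<Rightarrow> 'a::real_normed_field mat"
  assumes F: "\<And>x. x \<in> S \<Longrightarrow> F x \<in> carrier_mat n n"
    and entries: "\<And>i j. i < n \<Longrightarrow> j < n \<Longrightarrow> continuous_on S (\<lambda>x. F x $$ (i, j))"
  shows "continuous_on S (\<lambda>x. det (F x))"
proof -
  have "continuous_on S (\<lambda>x. \<Sum>p\<in>{p. p permutes {0..<n}}. signof p * (\<Prod>i=0..<n. F x $$ (i, p i)))"
    by (intro continuous_intros entries) (auto simp: permutes_in_image)
  then show ?thesis
    by (rule continuous_on_cong[THEN iffD1, OF refl, rotated]) (simp add: det_def'[OF F])
qed

lemma index_neg_char_matrix:
  assumes "A \<in> carrier_mat n n" "i < n" "j < n"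
  shows "(- char_matrix A x) $$ (i, j) = (if i = j then x else 0) - A $$ (i, j)"
  using assms by (simp add: char_matrix_def)

lemma neg_char_matrix_mult_vec:
  assumes A: "A \<in> carrier_mat n n" and z: "z \<in> carrier_vec n"
  shows "- char_matrix A x *\<^sub>v z = x \<cdot>\<^sub>v z - A *\<^sub>v z"
proof -
  have "- char_matrix A x = x \<cdot>\<^sub>m 1\<^sub>m n - A"
    using A by (intro eq_matI) (auto simp: char_matrix_def)
  then show ?thesis
    using A z by (auto simp: minus_mult_distrib_mat_vec[of _ n n])
qed

lemma mat_delete_neg_char_matrix:
  assumes "A \<in> carrier_mat n n"
  shows "mat_delete (- char_matrix A x) i i = - char_matrix (mat_delete A i i) x"
  using assms by (intro eq_matI) (auto simp: mat_delete_def char_matrix_def)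

lemma symmetric_defect_diff_eq:
  fixes A :: "'a::comm_ring_1 mat"
  assumes A: "A \<in> carrier_mat n n" and sym: "transpose_mat A = A" and v: "v < n"
    and z: "z \<in> carrier_vec n" "z $ v = 1" "A *\<^sub>v z = x \<cdot>\<^sub>v z - a \<cdot>\<^sub>v unit_vec n v"
    and w: "w \<in> carrier_vec n" "w $ v = 1" "A *\<^sub>v w = t \<cdot>\<^sub>v w - b \<cdot>\<^sub>v unit_vec n v"
  shows "a - b = (x - t) * (z \<bullet> w)"
proof -
  have "w \<bullet> (A *\<^sub>v z) = x * (w \<bullet> z) - a"
    using z w v by (simp add: scalar_prod_minus_distrib)
  moreover have "w \<bullet> (A *\<^sub>v z) = (A *\<^sub>v w) \<bullet> z"
    using transpose_vec_mult_scalar[OF A z(1) w(1)] sym by simp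
  moreover have "(A *\<^sub>v w) \<bullet> z = t * (w \<bullet> z) - b"
    using z w v by (simp add: minus_scalar_prod_distrib)
  moreover have "z \<bullet> w = w \<bullet> z" by (rule comm_scalar_prod[OF z(1) w(1)])
  ultimately show ?thesis by (simp add: algebra_simps)
qed

lemma index_square_le_scalar_prod_self:
  fixes z :: "real vec"
  assumes "z \<in> carrier_vec n" "i < n"
  shows "(z $ i)\<^sup>2 \<le> z \<bullet> z"
proof -
  have "z \<bullet> z = (z $ i)\<^sup>2 + (\<Sum>k\<in>{0..<n}-{i}. z $ k * z $ k)"
    using assms by (simp add: scalar_prod_def sum.remove power2_eq_square)
  then show ?thesis
    by (simp add: sum_nonneg)
qed

definition bordering_vec :: "'a::field mat \<Rightarrow> nat \<Rightarrow> 'a \<Rightarrow> 'a vec" where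
  "bordering_vec A v x =
     (1 / poly (char_poly (mat_delete A v v)) x) \<cdot>\<^sub>v col (Determinant.adj_mat (- char_matrix A x)) v"

lemma bordering_vec_carrier[simp]:
  "A \<in> carrier_mat n n \<Longrightarrow> bordering_vec A v x \<in> carrier_vec n"
  using adj_mat(1)[of "- char_matrix A x" n] by (simp add: bordering_vec_def carrier_vecI)

lemma index_bordering_vec:
  assumes A: "A \<in> carrier_mat n n" and "i < n" "v < n"
  shows "bordering_vec A v x $ i =
    cofactor (- char_matrix A x) v i / poly (char_poly (mat_delete A v v)) x"
  using assms carrier_matD[OF char_matrix_closed[OF A]]
  by (simp add: bordering_vec_def Determinant.adj_mat_def)

lemma bordering_vec:
  fixes A :: "'a::field mat"
  assumes A: "A \<in> carrier_mat n n" and v: "v < n"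
    and pB: "poly (char_poly (mat_delete A v v)) x \<noteq> 0"
  shows "bordering_vec A v x $ v = 1"
    and "A *\<^sub>v bordering_vec A v x = x \<cdot>\<^sub>v bordering_vec A v x -
      (poly (char_poly A) x / poly (char_poly (mat_delete A v v)) x) \<cdot>\<^sub>v unit_vec n v"
proof -
  let ?N = "- char_matrix A x" and ?pB = "poly (char_poly (mat_delete A v v)) x"
  let ?z = "bordering_vec A v x"
  have N: "?N \<in> carrier_mat n n" using A by simp
  have adjN: "Determinant.adj_mat ?N \<in> carrier_mat n n" using adj_mat(1)[OF N] .
  have "col (Determinant.adj_mat ?N) v $ v = det (mat_delete ?N v v)"
    using N v by (simp add: Determinant.adj_mat_def cofactor_def)
  also have "\<dots> = ?pB"
    using A by (simp add: mat_delete_neg_char_matrix char_poly_matrix[OF mat_delete_carrier[OF A]])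
  finally show "?z $ v = 1"
    using v adjN pB by (simp add: bordering_vec_def)
  have "?N *\<^sub>v col (Determinant.adj_mat ?N) v = col (?N * Determinant.adj_mat ?N) v"
    by (rule col_mult2[OF N adjN v, symmetric])
  also have "\<dots> = poly (char_poly A) x \<cdot>\<^sub>v unit_vec n v"
    using N v by (simp add: adj_mat(2)[OF N] char_poly_matrix[OF A])
  finally have "?N *\<^sub>v ?z = (poly (char_poly A) x / ?pB) \<cdot>\<^sub>v unit_vec n v"
    using N adjN v by (simp add: bordering_vec_def mult_mat_vec[of _ n n] smult_smult_assoc)
  then have "x \<cdot>\<^sub>v ?z - A *\<^sub>v ?z = (poly (char_poly A) x / ?pB) \<cdot>\<^sub>v unit_vec n v"
    using A by (simp add: neg_char_matrix_mult_vec)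
  moreover have "A *\<^sub>v ?z = x \<cdot>\<^sub>v ?z - (x \<cdot>\<^sub>v ?z - A *\<^sub>v ?z)"
    using A by (intro eq_vecI) (simp_all add: carrier_vecD[OF bordering_vec_carrier[OF A]])
  ultimately show "A *\<^sub>v ?z = x \<cdot>\<^sub>v ?z - (poly (char_poly A) x / ?pB) \<cdot>\<^sub>v unit_vec n v"
    by metis
qed

lemma one_le_bordering_vec_scalar_prod_self:
  fixes A :: "real mat"
  assumes A: "A \<in> carrier_mat n n" and v: "v < n"
    and pB: "poly (char_poly (mat_delete A v v)) x \<noteq> 0"
  shows "1 \<le> bordering_vec A v x \<bullet> bordering_vec A v x"
  using index_square_le_scalar_prod_self[OF bordering_vec_carrier[OF A, of v x] v]
  by (simp add: bordering_vec(1)[OF A v pB])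

lemma continuous_on_neg_char_matrix_index:
  fixes A :: "real mat"
  assumes "A \<in> carrier_mat n n" "i < n" "j < n"
  shows "continuous_on S (\<lambda>x. (- char_matrix A x) $$ (i, j))"
  using assms by (cases "i = j") (auto simp: index_neg_char_matrix intro: continuous_intros)

lemma continuous_on_bordering_vec:
  fixes A :: "real mat"
  assumes A: "A \<in> carrier_mat n n" and v: "v < n" and i: "i < n"
    and pB: "\<forall>x\<in>S. poly (char_poly (mat_delete A v v)) x \<noteq> 0"
  shows "continuous_on S (\<lambda>x. bordering_vec A v x $ i)"
proof -
  let ?N = "\<lambda>x. - char_matrix A x"
  have "continuous_on S (\<lambda>x. det (mat_delete (?N x) v i))"
  proof (rule continuous_on_det)
    show "mat_delete (?N x) v i \<in> carrier_mat (n - 1) (n - 1)" for x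
      by (rule mat_delete_carrier) (use A in simp)
    show "continuous_on S (\<lambda>x. mat_delete (?N x) v i $$ (a, b))"
      if "a < n - 1" "b < n - 1" for a b
    proof -
      have "continuous_on S (\<lambda>x. ?N x $$ (insert_index v a, insert_index i b))"
        using that by (intro continuous_on_neg_char_matrix_index[OF A]) (auto simp: insert_index_def)
      then show ?thesis
        using that carrier_matD[OF char_matrix_closed[OF A]] by (simp add: mat_delete_def insert_index_def)
    qed
  qed
  then have "continuous_on S
      (\<lambda>x. (-1) ^ (v + i) * det (mat_delete (?N x) v i) / poly (char_poly (mat_delete A v v)) x)"
    using pB by (intro continuous_intros) auto
  then show ?thesis
    using A v i by (simp add: index_bordering_vec cofactor_def)
qed

lemma char_poly_quotient_has_real_derivative:
  fixes A :: "real mat"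
  assumes A: "A \<in> carrier_mat n n" and sym: "transpose_mat A = A" and v: "v < n"
    and S: "open S" and pB: "\<forall>x\<in>S. poly (char_poly (mat_delete A v v)) x \<noteq> 0" and x: "x \<in> S"
  shows "((\<lambda>t. poly (char_poly A) t / poly (char_poly (mat_delete A v v)) t)
           has_real_derivative bordering_vec A v x \<bullet> bordering_vec A v x) (at x)"
proof -
  define \<phi> where "\<phi> t = poly (char_poly A) t / poly (char_poly (mat_delete A v v)) t" for t
  let ?z = "bordering_vec A v"
  have diff: "\<phi> t - \<phi> x = (t - x) * (?z t \<bullet> ?z x)" if "t \<in> S" for t
    unfolding \<phi>_def
    by (rule symmetric_defect_diff_eq[OF A sym v])
      (use A bordering_vec[OF A v pB[rule_format, OF that]] bordering_vec[OF A v pB[rule_format, OF x]]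
        in simp_all)
  have "continuous_on S (\<lambda>t. ?z t \<bullet> ?z x)"
    unfolding scalar_prod_def carrier_vecD[OF bordering_vec_carrier[OF A]]
    by (intro continuous_intros continuous_on_bordering_vec[OF A v _ pB]) auto
  then have "((\<lambda>t. ?z t \<bullet> ?z x) \<longlongrightarrow> ?z x \<bullet> ?z x) (at x)"
    using S x by (simp add: continuous_on_eq_continuous_at isCont_def)
  moreover have "\<forall>\<^sub>F t in at x. ?z t \<bullet> ?z x = (\<phi> t - \<phi> x) / (t - x)"
    using eventually_at_in_open[OF S x] by eventually_elim (simp add: diff)
  ultimately have "((\<lambda>t. (\<phi> t - \<phi> x) / (t - x)) \<longlongrightarrow> ?z x \<bullet> ?z x) (at x)"
    by (rule Lim_transform_eventually)
  then show ?thesis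
    unfolding has_field_derivative_iff \<phi>_def .
qed

lemma char_poly_quotient_strict_mono:
  fixes A :: "real mat"
  assumes A: "A \<in> carrier_mat n n" and sym: "transpose_mat A = A" and v: "v < n"
    and pB: "\<forall>x>a. poly (char_poly (mat_delete A v v)) x \<noteq> 0" and "a < s" "s < t"
  shows "poly (char_poly A) s / poly (char_poly (mat_delete A v v)) s
       < poly (char_poly A) t / poly (char_poly (mat_delete A v v)) t"
proof (rule DERIV_pos_imp_increasing[OF \<open>s < t\<close>])
  fix x assume "s \<le> x"
  then have x: "x \<in> {a<..}" using \<open>a < s\<close> by simp
  have "1 \<le> bordering_vec A v x \<bullet> bordering_vec A v x"
    using one_le_bordering_vec_scalar_prod_self[OF A v] pB x by simp
  with char_poly_quotient_has_real_derivative[OF A sym v open_greaterThan _ x] pB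
  show "\<exists>D. ((\<lambda>t. poly (char_poly A) t / poly (char_poly (mat_delete A v v)) t)
      has_real_derivative D) (at x) \<and> 0 < D"
    by force
qed

lemma order_simple_root:
  fixes p :: "'a::{idom,semiring_char_0} poly"
  assumes "p \<noteq> 0" "poly p a = 0" "poly (pderiv p) a \<noteq> 0"
  shows "order a p = 1"
  using assms order_pderiv[OF assms(1,2)] order_root[of "pderiv p" a] by simp

lemma eigenvalue_above_unique:
  fixes A :: "real mat"
  assumes A: "A \<in> carrier_mat n n" and sym: "transpose_mat A = A" and v: "v < n"
    and no_ev_above: "\<forall>x>a. \<not> eigenvalue (mat_delete A v v) x"
    and r: "eigenvalue A r" "a < r" and s: "eigenvalue A s" "a < s"
  shows "r = s"
proof -
  have pB: "\<forall>x>a. poly (char_poly (mat_delete A v v)) x \<noteq> 0"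
    using no_ev_above eigenvalue_root_char_poly[OF mat_delete_carrier[OF A]] by blast
  have root: "poly (char_poly A) r = 0" "poly (char_poly A) s = 0"
    using r(1) s(1) eigenvalue_root_char_poly[OF A] by simp_all
  show ?thesis
  proof (rule ccontr)
    assume "r \<noteq> s"
    then consider "r < s" | "s < r" by linarith
    then show False
      using char_poly_quotient_strict_mono[OF A sym v pB, of r s]
        char_poly_quotient_strict_mono[OF A sym v pB, of s r] root r(2) s(2)
      by cases simp_all
  qed
qed

lemma order_char_poly_eigenvalue_above:
  fixes A :: "real mat"
  assumes A: "A \<in> carrier_mat n n" and sym: "transpose_mat A = A" and v: "v < n"
    and no_ev_above: "\<forall>x>a. \<not> eigenvalue (mat_delete A v v) x"
    and r: "eigenvalue A r" "a < r"
  shows "order r (char_poly A) = 1"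
proof -
  let ?pA = "char_poly A" and ?pB = "char_poly (mat_delete A v v)"
  have pB: "\<forall>x>a. poly ?pB x \<noteq> 0"
    using no_ev_above eigenvalue_root_char_poly[OF mat_delete_carrier[OF A]] by blast
  have root: "poly ?pA r = 0"
    using r(1) eigenvalue_root_char_poly[OF A] by simp
  define \<phi> where "\<phi> t = poly ?pA t / poly ?pB t" for t
  define D where "D = bordering_vec A v r \<bullet> bordering_vec A v r"
  have "(\<phi> has_real_derivative D) (at r)"
    unfolding \<phi>_def D_def
    by (rule char_poly_quotient_has_real_derivative[OF A sym v open_greaterThan]) (use pB r(2) in auto)
  moreover have "1 \<le> D"
    using one_le_bordering_vec_scalar_prod_self[OF A v] pB r(2) by (simp add: D_def)
  ultimately have D: "(\<phi> has_real_derivative D) (at r)" "0 < D" by simp_all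
  have "((\<lambda>t. \<phi> t * poly ?pB t) has_real_derivative D * poly ?pB r + poly (pderiv ?pB) r * \<phi> r) (at r)"
    by (rule DERIV_mult[OF D(1) poly_DERIV])
  then have "(poly ?pA has_real_derivative D * poly ?pB r + poly (pderiv ?pB) r * \<phi> r) (at r)"
    by (rule has_field_derivative_transform_within_open[where S = "{a<..}"])
      (use r(2) pB in \<open>auto simp: \<phi>_def\<close>)
  then have "poly (pderiv ?pA) r = D * poly ?pB r"
    using DERIV_unique[OF poly_DERIV] root by (simp add: \<phi>_def)
  then have "poly (pderiv ?pA) r \<noteq> 0"
    using D(2) pB r(2) by simp
  moreover have "?pA \<noteq> 0"
    using degree_monic_char_poly[OF A] by auto
  ultimately show ?thesis
    using order_simple_root root by blast
qed

lemma eigenvalue_ge_of_quadratic_form: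
  fixes A :: "real mat"
  assumes A: "A \<in> carrier_mat n n"
    and form: "\<And>x. x \<in> carrier_vec n \<Longrightarrow> 0 \<le> x \<bullet> (A *\<^sub>v x) + c * (x \<bullet> x)"
    and ev: "eigenvalue A \<mu>"
  shows "- c \<le> \<mu>"
proof -
  obtain x where x: "x \<in> carrier_vec n" "x \<noteq> 0\<^sub>v n" "A *\<^sub>v x = \<mu> \<cdot>\<^sub>v x"
    using ev A unfolding eigenvalue_def eigenvector_def by auto
  obtain k where k: "k < n" "x $ k \<noteq> 0"
    using x(1,2) by (auto simp: vec_eq_iff)
  have "0 < x \<bullet> x"
    using index_square_le_scalar_prod_self[OF x(1) k(1)] k(2) by (smt (verit) zero_less_power2)
  moreover have "0 \<le> (\<mu> + c) * (x \<bullet> x)"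
    using form[OF x(1)] x by (simp add: algebra_simps)
  ultimately show ?thesis
    by (simp add: zero_le_mult_iff)
qed

lemma card_inter_quadratic_form_nonneg:
  fixes x :: "nat \<Rightarrow> real" and f :: "nat \<Rightarrow> 'a set"
  assumes U: "finite U" and f: "\<And>i. i < n \<Longrightarrow> f i \<subseteq> U"
  shows "0 \<le> (\<Sum>i<n. \<Sum>j<n. x i * x j * card (f i \<inter> f j))"
proof -
  define g where "g a i = (if a \<in> f i then x i else 0)" for a i
  have card: "x i * x j * card (f i \<inter> f j) = (\<Sum>a\<in>U. g a i * g a j)"
    if "i < n" for i j
  proof -
    have "(\<Sum>a\<in>U. g a i * g a j) = (\<Sum>a\<in>U. if a \<in> f i \<inter> f j then x i * x j else 0)"
      by (rule sum.cong) (auto simp: g_def)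
    also have "\<dots> = (\<Sum>a\<in>U \<inter> (f i \<inter> f j). x i * x j)"
      using sum.inter_restrict[OF U, of "\<lambda>_. x i * x j" "f i \<inter> f j"] by simp
    also have "U \<inter> (f i \<inter> f j) = f i \<inter> f j"
      using f[OF that] by auto
    finally show ?thesis
      by simp
  qed
  have "(\<Sum>i<n. \<Sum>j<n. x i * x j * card (f i \<inter> f j)) = (\<Sum>i<n. \<Sum>j<n. \<Sum>a\<in>U. g a i * g a j)"
    by (simp add: card)
  also have "\<dots> = (\<Sum>i<n. \<Sum>a\<in>U. \<Sum>j<n. g a i * g a j)"
    by (intro sum.cong refl) (rule sum.swap)
  also have "\<dots> = (\<Sum>a\<in>U. \<Sum>i<n. \<Sum>j<n. g a i * g a j)"
    by (rule sum.swap)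
  also have "\<dots> = (\<Sum>a\<in>U. (\<Sum>i<n. g a i)\<^sup>2)"
    by (simp add: power2_eq_square sum_product)
  finally show ?thesis
    by (simp add: sum_nonneg)
qed

lemma line_graph_card_inter:
  assumes "line_graph n E"
  obtains m and f :: "nat \<Rightarrow> nat set"
  where "\<And>i. i < n \<Longrightarrow> f i \<subseteq> {..<m}"
    and "\<And>i j. i < n \<Longrightarrow> j < n \<Longrightarrow>
           card (f i \<inter> f j) = (if i = j then 2 else if E i j then 1 else 0)"
proof -
  obtain m F f where F: "simple_graph m F"
    and bij: "bij_betw f {0..<n} {{a, b} | a b. a < m \<and> b < m \<and> F a b}"
    and adj: "\<forall>i<n. \<forall>j<n. i \<noteq> j \<longrightarrow> (E i j \<longleftrightarrow> f i \<inter> f j \<noteq> {})"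
    using assms unfolding line_graph_def by blast
  have edge: "f i \<subseteq> {..<m} \<and> finite (f i) \<and> card (f i) = 2" if "i < n" for i
  proof -
    have "f i \<in> {{a, b} | a b. a < m \<and> b < m \<and> F a b}"
      using bij_betwE[OF bij] that by simp
    then obtain a b where "f i = {a, b}" "a < m" "b < m" "F a b"
      by blast
    moreover have "a \<noteq> b"
      using F \<open>F a b\<close> \<open>a < m\<close> unfolding simple_graph_def by auto
    ultimately show ?thesis
      by simp
  qed
  have "card (f i \<inter> f j) = (if i = j then 2 else if E i j then 1 else 0)"
    if ij: "i < n" "j < n" for i j
  proof (cases "i = j")
    case True
    then show ?thesis using edge[OF ij(1)] by simp
  next
    case False
    then have "f i \<noteq> f j"
      using inj_onD[OF bij_betw_imp_inj_on[OF bij]] ij by auto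
    then have "f i \<inter> f j \<subset> f i"
      using card_subset_eq[of "f j" "f i"] edge[OF ij(1)] edge[OF ij(2)] by auto
    then have "card (f i \<inter> f j) < 2"
      using psubset_card_mono[of "f i"] edge[OF ij(1)] by auto
    moreover have "E i j \<longleftrightarrow> card (f i \<inter> f j) \<noteq> 0"
      using adj ij False edge[OF ij(1)] by simp
    ultimately show ?thesis
      using False by auto
  qed
  with edge that show ?thesis by blast
qed

lemma adj_mat_carrier[simp]: "adj_mat n E \<in> carrier_mat n n"
  by (simp add: adj_mat_def)

lemma transpose_adj_mat:
  "simple_graph n E \<Longrightarrow> transpose_mat (adj_mat n E) = adj_mat n E"
  by (intro eq_matI) (auto simp: adj_mat_def simple_graph_def)

lemma mat_delete_adj_mat:
  "mat_delete (adj_mat n E) v v = adj_mat (n - 1) (del_vertex v E)"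
  by (intro eq_matI) (auto simp: adj_mat_def mat_delete_def del_vertex_def)

lemma line_graph_eigenvalue_ge:
  assumes G: "simple_graph n E" "line_graph n E" and ev: "eigenvalue (adj_mat n E) \<mu>"
  shows "-2 \<le> \<mu>"
proof -
  obtain m and f :: "nat \<Rightarrow> nat set" where f: "\<And>i. i < n \<Longrightarrow> f i \<subseteq> {..<m}"
    and card: "\<And>i j. i < n \<Longrightarrow> j < n \<Longrightarrow>
               card (f i \<inter> f j) = (if i = j then 2 else if E i j then 1 else 0)"
    using line_graph_card_inter[OF G(2)] by metis
  have quadratic_form: "(\<Sum>i<n. \<Sum>j<n. x $ i * x $ j * card (f i \<inter> f j)) =
      x \<bullet> (adj_mat n E *\<^sub>v x) + 2 * (x \<bullet> x)"
    if x: "x \<in> carrier_vec n" for x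
  proof -
    have "(\<Sum>i<n. \<Sum>j<n. x $ i * x $ j * card (f i \<inter> f j)) =
        (\<Sum>i<n. \<Sum>j<n. x $ i * ((if E i j then 1 else 0) * x $ j) + (if i = j then 2 * (x $ i * x $ j) else 0))"
      using card G(1) by (intro sum.cong refl) (auto simp: simple_graph_def)
    also have "\<dots> = x \<bullet> (adj_mat n E *\<^sub>v x) + 2 * (x \<bullet> x)"
      using x by (simp add: scalar_prod_def adj_mat_def lessThan_atLeast0 sum.distrib sum_distrib_left)
    finally show ?thesis .
  qed
  have "0 \<le> x \<bullet> (adj_mat n E *\<^sub>v x) + 2 * (x \<bullet> x)" if "x \<in> carrier_vec n" for x
    using card_inter_quadratic_form_nonneg[where x = "\<lambda>i. x $ i" and U = "{..<m}" and f = f and n = n]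
      f quadratic_form[OF that] by simp
  then show ?thesis
    using eigenvalue_ge_of_quadratic_form[OF adj_mat_carrier _ ev] by simp
qed

theorem theorem9:
  fixes n :: nat and E :: "nat \<Rightarrow> nat \<Rightarrow> bool" and v :: nat
  assumes "simple_graph n E"
    and "\<not> cyclotomic n E"
    and "\<not> bipartite n E"
    and "v < n"
    and "cyclotomic (n - 1) (del_vertex v E)"
    and "line_graph n E"
  shows "salem_graph n E"
proof -
  let ?A = "adj_mat n E"
  have sym: "transpose_mat ?A = ?A"
    by (rule transpose_adj_mat[OF assms(1)])
  have no_ev_above: "\<forall>x>2. \<not> eigenvalue (mat_delete ?A v v) x"
    using assms(5) by (auto simp: mat_delete_adj_mat cyclotomic_def)
  have lower: "-2 \<le> \<mu>" if "eigenvalue ?A \<mu>" for \<mu>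
    by (rule line_graph_eigenvalue_ge[OF assms(1,6) that])
  obtain r where r: "eigenvalue ?A r" "2 < r"
    using assms(2) lower unfolding cyclotomic_def by force
  show ?thesis
    unfolding salem_graph_def
  proof (intro conjI exI[of _ r] allI impI)
    show "order r (char_poly ?A) = 1"
      by (rule order_char_poly_eigenvalue_above[OF adj_mat_carrier sym assms(4) no_ev_above r])
    show "\<mu> = r" if "2 < \<mu>" "eigenvalue ?A \<mu>" for \<mu>
      by (rule eigenvalue_above_unique[OF adj_mat_carrier sym assms(4) no_ev_above that(2,1) r])
  qed (use assms(3) r lower in auto)
qed

end
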